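(* Let $m>1$ and $a\in\mathbb{Z}_m$ with $2a^2-2a+1\equiv0\pmod m$, let $x\cdot y=ax+(1-a)y$ and $x\circ y=(1-a)x+ay$ on $\mathbb{Z}_m$. Then for $1\le k<m$, $(\mathbb{Z}_m,\cdot)$ is $k$-translatable if and only if $(\mathbb{Z}_m,\circ)$ is $(m-k)$-translatable (both with respect to the ordering $0,1,\dots,m-1$).
   Context: $(\mathbb{Z}_m,\cdot)$ is a quadratical quasigroup and $(\mathbb{Z}_m,\circ)$ is its dual ($x\circ y=y\cdot x$). A finite groupoid with ordering $q_1,\dots,q_n$ is $k$-translatable ($1\le k<n$) with respect to this ordering if $q_i\cdot q_j=q_{i-1}\cdot q_{j-k}$ for all $i\in\{2,\dots,n\}$, $j\in\{1,\dots,n\}$, indices taken modulo $n$ in $\{1,\dots,n\}$. *)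

theory Defs
  imports Main
begin

text \<open>A finite groupoid with ordering q_1,...,q_n (given as a list q, so q_i = q ! (i-1))
  is k-translatable (1 <= k < n) if q_i * q_j = q_(i-1) * q_(j-k) for all i in {2..n},
  j in {1..n}, indices taken modulo n in {1..n}.  The index (j-k) reduced into {1..n}
  is ((j-k-1) mod n) + 1, i.e. list position (j-k-1) mod n.\<close>
definition k_translatable :: "('a \<Rightarrow> 'a \<Rightarrow> 'a) \<Rightarrow> 'a list \<Rightarrow> nat \<Rightarrow> bool" where
  "k_translatable op q k \<longleftrightarrow>
     1 \<le> k \<and> k < length q \<and>
     (\<forall>i\<in>{2..length q}. \<forall>j\<in>{1..length q}.
        op (q ! (i - 1)) (q ! (j - 1)) =
        op (q ! (i - 2)) (q ! nat ((int j - int k - 1) mod int (length q))))"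

definition zm_order :: "nat \<Rightarrow> int list" where
  "zm_order m = map int [0..<m]"

definition dot_op :: "nat \<Rightarrow> int \<Rightarrow> int \<Rightarrow> int \<Rightarrow> int" where
  "dot_op m a x y = (a * x + (1 - a) * y) mod int m"

definition circ_op :: "nat \<Rightarrow> int \<Rightarrow> int \<Rightarrow> int \<Rightarrow> int" where
  "circ_op m a x y = ((1 - a) * x + a * y) mod int m"

end

theory Submission
  imports Defs
begin

text \<open>For an affine operation x\<cdot>y = cx + dy on \<open>\<int>\<^sub>m\<close>, the translatability identity
  reduces to the single congruence c + dk \<equiv> 0, independently of i and j.  Taking
  c = a, d = 1 - a for \<open>\<cdot>\<close> and c = 1 - a, d = a, k' = m - k for \<open>\<circ>\<close>, the two
  conditions read m | a + (1-a)k and m | (1-a) - ak.  Since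
  a(a + (1-a)k) + (1-a)((1-a) - ak) = a^2 + (1-a)^2 = 2a^2 - 2a + 1 \<equiv> 0 and both a and
  1 - a are units modulo m, each condition implies the other.\<close>

lemma length_zm_order [simp]: "length (zm_order m) = m"
  by (simp add: zm_order_def)

lemma nth_zm_order: "n < m \<Longrightarrow> zm_order m ! n = int n"
  by (simp add: zm_order_def)

lemma nth_zm_order_mod: "m > 0 \<Longrightarrow> zm_order m ! nat (x mod int m) = x mod int m"
  by (simp add: nth_zm_order nat_less_iff)

lemma affine_translation_step_iff:
  fixes m k i j :: nat and c d :: int
  assumes op: "\<And>x y. op x y = (c * x + d * y) mod int m"
    and "2 \<le> i" "1 \<le> j"
  shows "op (int (i - 1)) (int (j - 1)) = op (int (i - 2)) ((int j - int k - 1) mod int m)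
     \<longleftrightarrow> int m dvd c + d * int k"
proof -
  define q where "q = (int j - int k - 1) div int m"
  have r: "(int j - int k - 1) mod int m = (int j - int k - 1) - int m * q"
    by (simp add: q_def minus_div_mult_eq_mod[symmetric] algebra_simps)
  have "c * int (i - 1) + d * int (j - 1) - (c * int (i - 2) + d * ((int j - int k - 1) mod int m))
      = (c + d * int k) + int m * (d * q)"
    unfolding r using assms(2,3) by (simp add: of_nat_diff algebra_simps)
  then show ?thesis
    by (simp add: op mod_eq_dvd_iff dvd_add_left_iff)
qed

lemma k_translatable_affine_iff:
  fixes m k :: nat and c d :: int
  assumes "1 \<le> k" "k < m"
    and op: "\<And>x y. op x y = (c * x + d * y) mod int m"
  shows "k_translatable op (zm_order m) k \<longleftrightarrow> int m dvd c + d * int k"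
proof -
  have step: "op (zm_order m ! (i - 1)) (zm_order m ! (j - 1)) =
        op (zm_order m ! (i - 2)) (zm_order m ! nat ((int j - int k - 1) mod int m))
      \<longleftrightarrow> int m dvd c + d * int k" if "i \<in> {2..m}" "j \<in> {1..m}" for i j
  proof -
    have "i - 1 < m" "i - 2 < m" "j - 1 < m" "m > 0" using that by auto
    then show ?thesis
      using that affine_translation_step_iff[OF op, of i j k]
      by (simp add: nth_zm_order nth_zm_order_mod del: of_nat_diff)
  qed
  have "m \<ge> 2" using assms(1,2) by simp
  then have "{2..m} \<noteq> {}" "{1..m} \<noteq> {}" by auto
  then show ?thesis
    using assms(1,2) step by (auto simp: k_translatable_def)
qed

lemma coprime_left_of_dvd_sum_squares:
  fixes m x y :: "'a :: semiring_gcd"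
  assumes "m dvd x\<^sup>2 + y\<^sup>2" "coprime x y"
  shows "coprime m x"
proof (rule coprimeI)
  fix c assume "c dvd m" "c dvd x"
  then have "c dvd y\<^sup>2"
    using assms(1) by (metis dvd_add_right_iff dvd_power dvd_trans zero_less_numeral)
  moreover have "coprime x (y\<^sup>2)" using assms(2) by simp
  ultimately show "is_unit c" using \<open>c dvd x\<close> coprime_common_divisor by blast
qed

lemma dvd_linear_iff_of_dvd_sum_squares:
  fixes m x y k :: "'a :: ring_gcd"
  assumes "m dvd x\<^sup>2 + y\<^sup>2" "coprime x y"
  shows "m dvd x + y * k \<longleftrightarrow> m dvd y - x * k"
proof -
  have "coprime m x" "coprime m y"
    using coprime_left_of_dvd_sum_squares[OF assms]
      coprime_left_of_dvd_sum_squares[of m y x] assms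
    by (simp_all add: add.commute coprime_commute)
  have sum: "x * (x + y * k) + y * (y - x * k) = x\<^sup>2 + y\<^sup>2"
    by (simp add: power2_eq_square algebra_simps)
  have "m dvd x + y * k \<longleftrightarrow> m dvd x * (x + y * k)"
    using \<open>coprime m x\<close> by (simp add: coprime_dvd_mult_right_iff)
  also have "\<dots> \<longleftrightarrow> m dvd y * (y - x * k)"
    using assms(1) sum by (metis dvd_add_right_iff dvd_add_left_iff)
  also have "\<dots> \<longleftrightarrow> m dvd y - x * k"
    using \<open>coprime m y\<close> by (simp add: coprime_dvd_mult_right_iff)
  finally show ?thesis .
qed

theorem theorem9p4:
  fixes m k :: nat and a :: int
  assumes "m > 1"
    and "0 \<le> a" and "a < int m"
    and "(2 * a\<^sup>2 - 2 * a + 1) mod int m = 0"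
    and "1 \<le> k" and "k < m"
  shows "k_translatable (dot_op m a) (zm_order m) k \<longleftrightarrow>
         k_translatable (circ_op m a) (zm_order m) (m - k)"
proof -
  have dot: "k_translatable (dot_op m a) (zm_order m) k \<longleftrightarrow> int m dvd a + (1 - a) * int k"
    by (rule k_translatable_affine_iff) (use assms in \<open>auto simp: dot_op_def\<close>)
  have "k_translatable (circ_op m a) (zm_order m) (m - k)
      \<longleftrightarrow> int m dvd (1 - a) + a * int (m - k)"
    by (rule k_translatable_affine_iff) (use assms in \<open>auto simp: circ_op_def\<close>)
  also have "(1 - a) + a * int (m - k) = ((1 - a) - a * int k) + int m * a"
    using assms by (simp add: of_nat_diff algebra_simps)
  finally have circ: "k_translatable (circ_op m a) (zm_order m) (m - k)
      \<longleftrightarrow> int m dvd (1 - a) - a * int k"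
    by (simp add: dvd_add_left_iff)
  have "int m dvd a\<^sup>2 + (1 - a)\<^sup>2"
    using assms(4) by (simp add: dvd_eq_mod_eq_0 power2_eq_square algebra_simps)
  moreover have "coprime a (1 - a)"
  proof (rule coprimeI)
    fix c assume "c dvd a" "c dvd 1 - a"
    then have "c dvd a + (1 - a)" by (rule dvd_add)
    then show "is_unit c" by simp
  qed
  ultimately show ?thesis
    unfolding dot circ by (rule dvd_linear_iff_of_dvd_sum_squares)
qed

end
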